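(* For every $T\in\mathbb{T}$, $c(T)\le \beta(T)$.
   Context: Let $\mathbb{T}$ be the set of finite terms defined inductively by: the constant $e\in\mathbb{T}$; and if $X\in\mathbb{T}$ and $Xs$ is a finite (possibly empty) list of elements of $\mathbb{T}$, then $v(X,Xs)\in\mathbb{T}$ and $w(X,Xs)\in\mathbb{T}$. Write $[\,]$ for the empty list and $[X|Xs]$ for the list with first element $X$ followed by $Xs$. Define $n:\mathbb{T}\to\mathbb{N}$ by $n(e)=0$, $n(v(X,[\,]))=2^{n(X)+1}-1$, $n(v(X,[Y|Xs]))=(n(w(Y,Xs))+1)2^{n(X)+1}-1$, $n(w(X,[\,]))=2^{n(X)+2}-2$, $n(w(X,[Y|Xs]))=(n(v(Y,Xs))+2)2^{n(X)+1}-2$. Structural complexity $c:\mathbb{T}\to\mathbb{N}$: $c(e)=0$ and $c(v(X,Xs))=c(w(X,Xs))=\sum_{Y\in[X|Xs]}(1+c(Y))$ (sum over the elements of the list $[X|Xs]$). Bitsize $\beta:\mathbb{T}\to\mathbb{N}$: $\beta(e)=0$ and $\beta(v(X,Xs))=\beta(w(X,Xs))=\sum_{Y\in[X|Xs]}(n(Y)+1)$; this equals the number of applications of $o(x)=2x+1$ and $i(x)=2x+2$ in the unique representation of $n(T)$ as an iterated composition of $o$ and $i$ applied to $0$. *)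

theory Defs
  imports Main
begin

datatype T = e | v T "T list" | w T "T list"

fun n :: "T \<Rightarrow> nat" where
  "n e = 0"
| "n (v X []) = 2 ^ (n X + 1) - 1"
| "n (v X (Y # Xs)) = (n (w Y Xs) + 1) * 2 ^ (n X + 1) - 1"
| "n (w X []) = 2 ^ (n X + 2) - 2"
| "n (w X (Y # Xs)) = (n (v Y Xs) + 2) * 2 ^ (n X + 1) - 2"

fun c :: "T \<Rightarrow> nat" where
  "c e = 0"
| "c (v X Xs) = (\<Sum>Y\<leftarrow>X # Xs. 1 + c Y)"
| "c (w X Xs) = (\<Sum>Y\<leftarrow>X # Xs. 1 + c Y)"

fun bitsize :: "T \<Rightarrow> nat" where
  "bitsize e = 0"
| "bitsize (v X Xs) = (\<Sum>Y\<leftarrow>X # Xs. n Y + 1)"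
| "bitsize (w X Xs) = (\<Sum>Y\<leftarrow>X # Xs. n Y + 1)"

end

theory Submission
  imports Defs
begin

text \<open>The key observation is that the bitsize of a term never exceeds its value: the
  contribution n X + 1 of the head is dominated by the factor 2 ^ (n X + 1) by which it scales
  the value of the tail. Knowing bitsize Y \<le> n Y for the children, c t \<le> bitsize t follows by
  structural induction, comparing the two defining sums summand by summand.\<close>

lemma suc_le_two_pow_suc_minus_one: "k + 1 \<le> (2::nat) ^ (k + 1) - 1"
  using less_exp[of "k + 1"] by linarith

lemma add_mult_le_mult_add: "1 \<le> (b::nat) \<Longrightarrow> a + k * b \<le> (a + k) * b"
  by (simp add: algebra_simps)

lemma bitsize_le_n_v_w: "bitsize (v X Xs) \<le> n (v X Xs) \<and> bitsize (w X Xs) \<le> n (w X Xs)"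
proof (induction Xs arbitrary: X)
  case Nil
  have "n X + 1 \<le> 2 ^ (n X + 1) - 1"
    by (rule suc_le_two_pow_suc_minus_one)
  moreover have "(2::nat) ^ (n X + 2) = 2 * 2 ^ (n X + 1)"
    by simp
  ultimately show ?case
    by simp
next
  case (Cons Y Xs)
  define p :: nat where "p = 2 ^ (n X + 1)"
  have head: "n X + 1 \<le> p - 1" and "1 \<le> p"
    unfolding p_def using suc_le_two_pow_suc_minus_one by auto
  then have "n (w Y Xs) + p \<le> (n (w Y Xs) + 1) * p"
    and "n (v Y Xs) + 2 * p \<le> (n (v Y Xs) + 2) * p"
    using add_mult_le_mult_add by (metis mult_1)+
  moreover have "bitsize (v X (Y # Xs)) = n X + 1 + bitsize (w Y Xs)"
    and "bitsize (w X (Y # Xs)) = n X + 1 + bitsize (v Y Xs)"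
    and "n (v X (Y # Xs)) = (n (w Y Xs) + 1) * p - 1"
    and "n (w X (Y # Xs)) = (n (v Y Xs) + 2) * p - 2"
    by (simp_all add: p_def)
  ultimately show ?case
    using head Cons.IH[of Y] by linarith
qed

lemma bitsize_le_n: "bitsize t \<le> n t"
  by (cases t) (use bitsize_le_n_v_w in auto)

lemma sum_list_c_le_sum_list_n: "(\<Sum>Y\<leftarrow>Ys. 1 + c Y) \<le> (\<Sum>Y\<leftarrow>Ys. n Y + 1)"
  if "\<And>Y. Y \<in> set Ys \<Longrightarrow> c Y \<le> bitsize Y"
  using that bitsize_le_n by (intro sum_list_mono) (auto intro: le_trans)

theorem proposition11:
  fixes t :: T
  shows "c t \<le> bitsize t"
proof (induction t)
  case e
  then show ?case by simp
next
  case (v X Xs)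
  then show ?case
    using sum_list_c_le_sum_list_n[of "X # Xs"] by auto
next
  case (w X Xs)
  then show ?case
    using sum_list_c_le_sum_list_n[of "X # Xs"] by auto
qed

end
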